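(* Let $\mathsf{\Sigma}\in\mathbb{R}^{N\times N_S}$ and $\mathsf{\Lambda}\in\mathbb{R}^{N\times N_L}$ be the Star-to-RWG and Loop-to-RWG matrices of a triangular surface mesh (so that $\mathsf{\Sigma}^{\mathrm T}\mathsf{\Lambda}=\mathsf{0}$), with $\mathsf{P}^\Sigma=\mathsf{\Sigma}(\mathsf{\Sigma}^{\mathrm T}\mathsf{\Sigma})^+\mathsf{\Sigma}^{\mathrm T}$, $\mathbb{P}^\Lambda=\mathsf{\Lambda}(\mathsf{\Lambda}^{\mathrm T}\mathsf{\Lambda})^+\mathsf{\Lambda}^{\mathrm T}$, and quasi-Helmholtz Laplacian filters $\mathsf{P}_n^\Sigma=\mathsf{\Sigma}((\mathsf{\Sigma}^{\mathrm T}\mathsf{\Sigma})_n)^+\mathsf{\Sigma}^{\mathrm T}$, $\mathbb{P}_n^\Lambda=\mathsf{\Lambda}((\mathsf{\Lambda}^{\mathrm T}\mathsf{\Lambda})_n)^+\mathsf{\Lambda}^{\mathrm T}$, $\mathsf{P}_n^{\Lambda H}=\mathbb{P}_n^\Lambda+\mathsf{I}-\mathsf{P}^\Sigma-\mathbb{P}^\Lambda$, $\mathbb{P}_n^{\Sigma H}=\mathsf{P}_n^\Sigma+\mathsf{I}-\mathbb{P}^\Lambda-\mathsf{P}^\Sigma$. Then for all integers $1\le m<n<p<q\le N_S$, $$(\mathsf{P}_m^\Sigma-\mathsf{P}_n^\Sigma)(\mathsf{P}_p^\Sigma-\mathsf{P}_q^\Sigma)=\mathsf{0},\qquad (\mathbb{P}_m^{\Sigma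 H}-\mathbb{P}_n^{\Sigma H})(\mathbb{P}_p^{\Sigma H}-\mathbb{P}_q^{\Sigma H})=\mathsf{0},$$ and for all integers $1\le m<n<p<q\le N_L$, $$(\mathbb{P}_m^\Lambda-\mathbb{P}_n^\Lambda)(\mathbb{P}_p^\Lambda-\mathbb{P}_q^\Lambda)=\mathsf{0},\qquad (\mathsf{P}_m^{\Lambda H}-\mathsf{P}_n^{\Lambda H})(\mathsf{P}_p^{\Lambda H}-\mathsf{P}_q^{\Lambda H})=\mathsf{0}.$$
   Context: Consider a closed triangulated surface with $N$ edges, $N_S$ triangles and $N_L$ vertices; $\mathsf{I}$ is the $N\times N$ identity. Each edge $m$ is shared by two triangles $c_m^+$, $c_m^-$. $[\mathsf{\Sigma}]_{mn}=1$ if cell $n$ is $c_m^+$, $-1$ if cell $n$ is $c_m^-$, $0$ otherwise. $[\mathsf{\Lambda}]_{mn}=\pm1$ when vertex $n$ is an endpoint of edge $m$ (opposite signs for the two endpoints, fixed by the orientation convention of the RWG functions), $0$ otherwise; with this convention $\mathsf{\Sigma}^{\mathrm T}\mathsf{\Lambda}=\mathsf{0}$. $^+$ denotes the Moore–Penrose pseudo-inverse. For $\mathsf{X}\in\{\mathsf{\Sigma},\mathsf{\Lambda}\}$ with $N_x$ columns, fix an SVD $\mathsf{X}=\mathsf{U}_X\mathsf{S}_X\mathsf{V}_X^{\mathrm T}$ with $\mathsf{V}_X$ orthogonal $N_x\times N_x$ and singular values $\sigma_{X,1}\ge\dots\ge\sigma_{X,N_x}\ge0$, so $\mathsf{X}^{\mathrm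 T}\mathsf{X}=\mathsf{V}_X\mathrm{diag}(\sigma_{X,i}^2)\mathsf{V}_X^{\mathrm T}$. For $1\le n\le N_x$, $\mathsf{L}_{X,n}$ is diagonal with $[\mathsf{L}_{X,n}]_{ii}=\sigma_{X,i}$ if $i>N_x-n$ and $0$ otherwise, and $(\mathsf{X}^{\mathrm T}\mathsf{X})_n=\mathsf{V}_X\mathsf{L}_{X,n}^2\mathsf{V}_X^{\mathrm T}$. *)

theory Defs
  imports "Jordan_Normal_Form.Matrix"
begin

text \<open>Matrices are Jordan_Normal_Form matrices with explicit dimensions; indices
  are 0-based (paper index i corresponds to i-1 here).\<close>

definition pinv :: "real mat \<Rightarrow> real mat" where
  "pinv A = (THE B. B \<in> carrier_mat (dim_col A) (dim_row A) \<and>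
       A * B * A = A \<and> B * A * B = B \<and>
       transpose_mat (A * B) = A * B \<and> transpose_mat (B * A) = B * A)"

definition orthogonal_mat :: "nat \<Rightarrow> real mat \<Rightarrow> bool" where
  "orthogonal_mat k V \<longleftrightarrow> V \<in> carrier_mat k k \<and>
     transpose_mat V * V = 1\<^sub>m k \<and> V * transpose_mat V = 1\<^sub>m k"

definition is_svd :: "nat \<Rightarrow> nat \<Rightarrow> real mat \<Rightarrow> real mat \<Rightarrow> real mat \<Rightarrow> real mat
      \<Rightarrow> (nat \<Rightarrow> real) \<Rightarrow> bool" where
  "is_svd N k X U S V \<sigma> \<longleftrightarrow>
     X \<in> carrier_mat N k \<and> orthogonal_mat N U \<and> orthogonal_mat k V \<and>
     S = mat N k (\<lambda>(i, j). if i = j then \<sigma> i else 0) \<and>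
     (\<forall>i < k. 0 \<le> \<sigma> i) \<and> (\<forall>i j. i \<le> j \<and> j < k \<longrightarrow> \<sigma> j \<le> \<sigma> i) \<and>
     (\<forall>i. N \<le> i \<and> i < k \<longrightarrow> \<sigma> i = 0) \<and>
     X = U * S * transpose_mat V"

definition Lmat :: "nat \<Rightarrow> (nat \<Rightarrow> real) \<Rightarrow> nat \<Rightarrow> real mat" where
  "Lmat k \<sigma> n = mat k k (\<lambda>(i, j). if i = j \<and> k - n \<le> i then \<sigma> i else 0)"

definition gram_n :: "nat \<Rightarrow> real mat \<Rightarrow> (nat \<Rightarrow> real) \<Rightarrow> nat \<Rightarrow> real mat" where
  "gram_n k V \<sigma> n = V * (Lmat k \<sigma> n * Lmat k \<sigma> n) * transpose_mat V"

definition qh_proj :: "real mat \<Rightarrow> real mat" where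
  "qh_proj X = X * pinv (transpose_mat X * X) * transpose_mat X"

definition qh_filter :: "nat \<Rightarrow> real mat \<Rightarrow> real mat \<Rightarrow> (nat \<Rightarrow> real) \<Rightarrow> nat \<Rightarrow> real mat" where
  "qh_filter k X V \<sigma> n = X * pinv (gram_n k V \<sigma> n) * transpose_mat X"

definition star_matrix :: "nat \<Rightarrow> nat \<Rightarrow> real mat \<Rightarrow> bool" where
  "star_matrix N NS Sig \<longleftrightarrow> Sig \<in> carrier_mat N NS \<and>
     (\<forall>m < N. \<exists>cp cm. cp < NS \<and> cm < NS \<and> cp \<noteq> cm \<and>
        (\<forall>c < NS. Sig $$ (m, c) = (if c = cp then 1 else if c = cm then -1 else 0))) \<and>
     (\<forall>c < NS. card {m. m < N \<and> Sig $$ (m, c) \<noteq> 0} = 3)"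

definition loop_matrix :: "nat \<Rightarrow> nat \<Rightarrow> real mat \<Rightarrow> bool" where
  "loop_matrix N NL Lam \<longleftrightarrow> Lam \<in> carrier_mat N NL \<and>
     (\<forall>m < N. \<exists>a b. a < NL \<and> b < NL \<and> a \<noteq> b \<and>
        (\<forall>v < NL. Lam $$ (m, v) = (if v = a then 1 else if v = b then -1 else 0)))"

definition mesh_matrices :: "nat \<Rightarrow> nat \<Rightarrow> nat \<Rightarrow> real mat \<Rightarrow> real mat \<Rightarrow> bool" where
  "mesh_matrices N NS NL Sig Lam \<longleftrightarrow> star_matrix N NS Sig \<and> loop_matrix N NL Lam \<and>
     transpose_mat Sig * Lam = 0\<^sub>m NS NL"

end

theory Submission
  imports Defs
begin

text \<open>With X = U S V^T, the truncated Gram matrix (X^T X)_n = V L_n^2 V^T has the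
  pseudo-inverse V (L_n^2)^+ V^T, so every filter X ((X^T X)_n)^+ X^T equals U D_n U^T, where
  the 0/1 diagonal D_n selects the indices i with k - n \<le> i < k and nonzero singular value.
  For m < n \<le> p < q the difference D_m - D_n lives on [k - n, k - m) and D_p - D_q on
  [k - q, k - p); these windows are disjoint, so the product vanishes. The Helmholtz variants
  differ from the filters by a matrix independent of n, which cancels in the differences.\<close>

text \<open>Unlike \<open>assoc_mult_mat\<close> and \<open>transpose_mult\<close>, these variants have side conditions
  without variables absent from the conclusion, so the simplifier can use them.\<close>

lemma assoc_mult_mat_dims:
  "dim_col A = dim_row B \<Longrightarrow> dim_col B = dim_row C \<Longrightarrow> A * B * C = A * (B * C)"
  by (rule assoc_mult_mat[OF carrier_matI carrier_matI carrier_matI]) auto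

lemma transpose_mult_dims:
  fixes A B :: "'a :: comm_semiring_0 mat"
  shows "dim_col A = dim_row B \<Longrightarrow> transpose_mat (A * B) = transpose_mat B * transpose_mat A"
  by (rule transpose_mult[OF carrier_matI carrier_matI]) auto

definition is_pinv :: "real mat \<Rightarrow> real mat \<Rightarrow> bool" where
  "is_pinv A B \<longleftrightarrow> B \<in> carrier_mat (dim_col A) (dim_row A) \<and>
     A * B * A = A \<and> B * A * B = B \<and>
     transpose_mat (A * B) = A * B \<and> transpose_mat (B * A) = B * A"

lemma is_pinvD:
  assumes "is_pinv A B"
  shows "dim_row B = dim_col A" "dim_col B = dim_row A"
    "A * B * A = A" "B * A * B = B"
    "transpose_mat (A * B) = A * B" "transpose_mat (B * A) = B * A"
  using assms by (auto simp: is_pinv_def)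

lemma is_pinv_mult_left_unique:
  assumes B: "is_pinv A B" and C: "is_pinv A C"
  shows "A * B = A * C"
proof -
  note B' = is_pinvD[OF B] and C' = is_pinvD[OF C]
  have "A * B = transpose_mat (A * C * A * B)"
    using B'(5) C'(3) by simp
  also have "\<dots> = transpose_mat (A * B) * transpose_mat (A * C)"
    using B'(1,2) C'(1,2) by (simp add: assoc_mult_mat_dims transpose_mult_dims)
  also have "\<dots> = A * B * A * C"
    using B'(1,2,5) C'(1,2,5) by (simp add: assoc_mult_mat_dims)
  finally show ?thesis
    using B'(3) by simp
qed

lemma is_pinv_mult_right_unique:
  assumes B: "is_pinv A B" and C: "is_pinv A C"
  shows "B * A = C * A"
proof -
  note B' = is_pinvD[OF B] and C' = is_pinvD[OF C]
  have "B * A = transpose_mat (B * (A * C * A))"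
    using B'(6) C'(3) by simp
  also have "\<dots> = transpose_mat (C * A) * transpose_mat (B * A)"
    using B'(1,2) C'(1,2) by (simp add: assoc_mult_mat_dims transpose_mult_dims)
  also have "\<dots> = C * (A * B * A)"
    using B'(1,2,6) C'(1,2,6) by (simp add: assoc_mult_mat_dims)
  finally show ?thesis
    using B'(3) by simp
qed

lemma is_pinv_unique:
  assumes B: "is_pinv A B" and C: "is_pinv A C"
  shows "B = C"
proof -
  note B' = is_pinvD[OF B] and C' = is_pinvD[OF C]
  have "B = B * (A * C)"
    using B'(1,2,4) is_pinv_mult_left_unique[OF B C] by (simp add: assoc_mult_mat_dims)
  also have "\<dots> = B * A * C"
    using B'(1,2) C'(1,2) by (simp add: assoc_mult_mat_dims)
  also have "\<dots> = C"
    using C'(4) is_pinv_mult_right_unique[OF B C] by simp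
  finally show ?thesis .
qed

lemma pinv_eqI:
  assumes "is_pinv A B"
  shows "pinv A = B"
proof -
  have "pinv A = (THE B. is_pinv A B)"
    unfolding pinv_def is_pinv_def ..
  also have "\<dots> = B"
    using assms by (rule the_equality) (metis assms is_pinv_unique)
  finally show ?thesis .
qed

definition rect_diag_mat :: "nat \<Rightarrow> nat \<Rightarrow> (nat \<Rightarrow> 'a :: zero) \<Rightarrow> 'a mat" where
  "rect_diag_mat r c f = mat r c (\<lambda>(i, j). if i = j then f i else 0)"

lemma rect_diag_mat_carrier [simp]: "rect_diag_mat r c f \<in> carrier_mat r c"
  and dim_row_rect_diag_mat [simp]: "dim_row (rect_diag_mat r c f) = r"
  and dim_col_rect_diag_mat [simp]: "dim_col (rect_diag_mat r c f) = c"
  by (simp_all add: rect_diag_mat_def)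

lemma transpose_rect_diag_mat [simp]: "transpose_mat (rect_diag_mat r c f) = rect_diag_mat c r f"
  by (rule eq_matI) (auto simp: rect_diag_mat_def)

lemma rect_diag_mat_cong:
  "(\<And>i. i < r \<Longrightarrow> i < c \<Longrightarrow> f i = g i) \<Longrightarrow> rect_diag_mat r c f = rect_diag_mat r c g"
  by (rule eq_matI) (auto simp: rect_diag_mat_def)

lemma rect_diag_mat_zero: "rect_diag_mat r c (\<lambda>_. 0) = 0\<^sub>m r c"
  by (rule eq_matI) (auto simp: rect_diag_mat_def)

lemma rect_diag_mat_diff:
  fixes f g :: "nat \<Rightarrow> 'a :: group_add"
  shows "rect_diag_mat r c f - rect_diag_mat r c g = rect_diag_mat r c (\<lambda>i. f i - g i)"
  by (rule eq_matI) (auto simp: rect_diag_mat_def)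

lemma rect_diag_mat_mult:
  fixes f g :: "nat \<Rightarrow> 'a :: semiring_0"
  shows "rect_diag_mat a b f * rect_diag_mat b c g = rect_diag_mat a c (\<lambda>i. if i < b then f i * g i else 0)"
proof (rule eq_matI)
  fix i j assume i: "i < dim_row (rect_diag_mat a c (\<lambda>i. if i < b then f i * g i else 0))"
    and j: "j < dim_col (rect_diag_mat a c (\<lambda>i. if i < b then f i * g i else 0))"
  have "(rect_diag_mat a b f * rect_diag_mat b c g) $$ (i, j) =
      (\<Sum>l\<in>{0..<b}. (if i = l then f i else 0) * (if l = j then g l else 0))"
    using i j by (simp add: rect_diag_mat_def scalar_prod_def)
  also have "\<dots> = (\<Sum>l\<in>{0..<b}. if l = i then (if i = j then f i * g i else 0) else 0)"
    by (rule sum.cong) auto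
  finally show "(rect_diag_mat a b f * rect_diag_mat b c g) $$ (i, j) =
      rect_diag_mat a c (\<lambda>i. if i < b then f i * g i else 0) $$ (i, j)"
    using i j by (simp add: rect_diag_mat_def)
qed auto

text \<open>No case split on zero entries is needed, since \<open>inverse 0 = 0\<close>.\<close>

lemma is_pinv_rect_diag_mat:
  "is_pinv (rect_diag_mat r c d) (rect_diag_mat c r (\<lambda>i. inverse (d i)))"
  unfolding is_pinv_def
  by (auto simp: rect_diag_mat_mult intro!: rect_diag_mat_cong) (metis right_inverse, metis left_inverse)

lemma orthogonal_matD:
  assumes "orthogonal_mat k V"
  shows "dim_row V = k" "dim_col V = k" "transpose_mat V * V = 1\<^sub>m k"
  using assms by (auto simp: orthogonal_mat_def)

lemma orthogonal_mat_carrier: "orthogonal_mat k V \<Longrightarrow> V \<in> carrier_mat k k"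
  by (simp add: orthogonal_mat_def)

lemma orthogonal_mat_cancel_left:
  assumes "orthogonal_mat k V" and "dim_row X = k"
  shows "transpose_mat V * (V * X) = X"
proof -
  note V = orthogonal_matD[OF assms(1)]
  have "transpose_mat V * (V * X) = (transpose_mat V * V) * X"
    using V(1,2) assms(2) by (intro assoc_mult_mat_dims[symmetric]) simp_all
  also have "\<dots> = X"
    unfolding V(3) using assms(2) by (rule left_mult_one_mat[OF carrier_matI]) simp_all
  finally show ?thesis .
qed

lemma orthogonal_conj_mult:
  assumes V: "orthogonal_mat k V" and A: "A \<in> carrier_mat k k" and B: "B \<in> carrier_mat k k"
  shows "V * A * transpose_mat V * (V * B * transpose_mat V) = V * (A * B) * transpose_mat V"
  using carrier_matD[OF A] carrier_matD[OF B] orthogonal_matD[OF V]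
  by (simp add: assoc_mult_mat_dims orthogonal_mat_cancel_left[OF V])

lemma orthogonal_conj_transpose:
  assumes "orthogonal_mat k V" and "A \<in> carrier_mat k k"
  shows "transpose_mat (V * A * transpose_mat V) = V * transpose_mat A * transpose_mat V"
  using carrier_matD[OF assms(2)] orthogonal_matD[OF assms(1)]
  by (simp add: assoc_mult_mat_dims transpose_mult_dims)

lemma is_pinv_orthogonal_conj:
  assumes V: "orthogonal_mat k V" and A: "A \<in> carrier_mat k k" and AB: "is_pinv A B"
  shows "is_pinv (V * A * transpose_mat V) (V * B * transpose_mat V)"
proof -
  note B = is_pinvD[OF AB]
  have B_carrier: "B \<in> carrier_mat k k"
    using A B(1,2) by (intro carrier_matI) auto
  have AB_carrier: "A * B \<in> carrier_mat k k" and BA_carrier: "B * A \<in> carrier_mat k k"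
    using A B_carrier by simp_all
  note mult = orthogonal_conj_mult[OF V] and tr = orthogonal_conj_transpose[OF V]
  show ?thesis
    unfolding is_pinv_def
  proof (intro conjI)
    show "V * B * transpose_mat V \<in> carrier_mat (dim_col (V * A * transpose_mat V))
        (dim_row (V * A * transpose_mat V))"
      using orthogonal_mat_carrier[OF V] B_carrier by simp
  qed (simp_all only: mult[OF A B_carrier] mult[OF B_carrier A] mult[OF AB_carrier A]
      mult[OF BA_carrier B_carrier] tr[OF AB_carrier] tr[OF BA_carrier] B(3-6))
qed

lemma orthogonal_sandwich:
  assumes V: "orthogonal_mat k V" and U: "U \<in> carrier_mat N N"
    and S: "S \<in> carrier_mat N k" and D: "D \<in> carrier_mat k k"
  shows "U * S * transpose_mat V * (V * D * transpose_mat V) * transpose_mat (U * S * transpose_mat V) =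
    U * (S * D * transpose_mat S) * transpose_mat U"
  using carrier_matD[OF U] carrier_matD[OF S] carrier_matD[OF D] orthogonal_matD[OF V]
  by (simp add: assoc_mult_mat_dims transpose_mult_dims orthogonal_mat_cancel_left[OF V])

lemma Lmat_eq_rect_diag_mat: "Lmat k \<sigma> n = rect_diag_mat k k (\<lambda>i. if k - n \<le> i then \<sigma> i else 0)"
  by (rule eq_matI) (auto simp: Lmat_def rect_diag_mat_def)

lemma pinv_gram_n:
  assumes V: "orthogonal_mat k V"
  shows "pinv (gram_n k V \<sigma> n) =
    V * rect_diag_mat k k (\<lambda>i. inverse (if k - n \<le> i then \<sigma> i ^ 2 else 0)) * transpose_mat V"
proof -
  have L2: "Lmat k \<sigma> n * Lmat k \<sigma> n = rect_diag_mat k k (\<lambda>i. if k - n \<le> i then \<sigma> i ^ 2 else 0)"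
    unfolding Lmat_eq_rect_diag_mat rect_diag_mat_mult
    by (rule rect_diag_mat_cong) (simp add: power2_eq_square)
  show ?thesis
    unfolding gram_n_def L2
    by (intro pinv_eqI is_pinv_orthogonal_conj[OF V] is_pinv_rect_diag_mat rect_diag_mat_carrier)
qed

definition filter_mask :: "nat \<Rightarrow> (nat \<Rightarrow> real) \<Rightarrow> nat \<Rightarrow> nat \<Rightarrow> real" where
  "filter_mask k \<sigma> n i = (if i < k \<and> k - n \<le> i \<and> \<sigma> i \<noteq> 0 then 1 else 0)"

lemma qh_filter_svd:
  assumes "is_svd N k X U S V \<sigma>"
  shows "qh_filter k X V \<sigma> n = U * rect_diag_mat N N (filter_mask k \<sigma> n) * transpose_mat U"
proof -
  have U: "orthogonal_mat N U" and V: "orthogonal_mat k V"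
    and S: "S = rect_diag_mat N k \<sigma>" and X: "X = U * S * transpose_mat V"
    using assms by (auto simp: is_svd_def rect_diag_mat_def)
  have "S * rect_diag_mat k k (\<lambda>i. inverse (if k - n \<le> i then \<sigma> i ^ 2 else 0)) * transpose_mat S =
      rect_diag_mat N N (filter_mask k \<sigma> n)"
    unfolding S transpose_rect_diag_mat rect_diag_mat_mult
    by (rule rect_diag_mat_cong) (simp add: filter_mask_def field_simps power2_eq_square)
  then show ?thesis
    unfolding qh_filter_def pinv_gram_n[OF V] X
    by (simp add: orthogonal_sandwich[OF V orthogonal_mat_carrier[OF U]] S)
qed

lemma filter_mask_diff_mult_eq_0:
  assumes "m \<le> n" "n \<le> p" "p \<le> q"
  shows "(filter_mask k \<sigma> m i - filter_mask k \<sigma> n i) * (filter_mask k \<sigma> p i - filter_mask k \<sigma> q i) = 0"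
  using assms by (cases "k - n \<le> i") (auto simp: filter_mask_def)

lemma mult_diff_mult_distrib_mat:
  fixes U W A B :: "'a :: ring mat"
  assumes "U \<in> carrier_mat N N" "W \<in> carrier_mat N N" "A \<in> carrier_mat N N" "B \<in> carrier_mat N N"
  shows "U * A * W - U * B * W = U * (A - B) * W"
proof -
  have "U * A * W - U * B * W = (U * A - U * B) * W"
    using assms by (intro minus_mult_distrib_mat[of _ N N, symmetric]) simp_all
  also have "U * A - U * B = U * (A - B)"
    using assms by (intro mult_minus_distrib_mat[symmetric])
  finally show ?thesis .
qed

lemma qh_filter_diff_mult_eq_0:
  assumes svd: "is_svd N k X U S V \<sigma>" and "m \<le> n" "n \<le> p" "p \<le> q"
  shows "(qh_filter k X V \<sigma> m - qh_filter k X V \<sigma> n) * (qh_filter k X V \<sigma> p - qh_filter k X V \<sigma> q)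
    = 0\<^sub>m N N"
proof -
  define D where "D r = rect_diag_mat N N (filter_mask k \<sigma> r)" for r
  have U: "orthogonal_mat N U"
    using svd by (simp add: is_svd_def)
  have U_carrier: "U \<in> carrier_mat N N" and Ut_carrier: "transpose_mat U \<in> carrier_mat N N"
    using orthogonal_mat_carrier[OF U] by simp_all
  have D: "D r \<in> carrier_mat N N" for r
    by (simp add: D_def)
  have "(qh_filter k X V \<sigma> m - qh_filter k X V \<sigma> n) * (qh_filter k X V \<sigma> p - qh_filter k X V \<sigma> q)
      = U * (D m - D n) * transpose_mat U * (U * (D p - D q) * transpose_mat U)"
    unfolding qh_filter_svd[OF svd] D_def[symmetric] mult_diff_mult_distrib_mat[OF U_carrier Ut_carrier D D] ..
  also have "\<dots> = U * ((D m - D n) * (D p - D q)) * transpose_mat U"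
    using D by (intro orthogonal_conj_mult[OF U] minus_carrier_mat)
  also have "(D m - D n) * (D p - D q) = 0\<^sub>m N N"
    unfolding D_def rect_diag_mat_diff rect_diag_mat_mult rect_diag_mat_zero[symmetric]
    by (rule rect_diag_mat_cong) (simp add: filter_mask_diff_mult_eq_0 assms)
  finally show ?thesis
    using U_carrier by simp
qed

lemma qh_filter_carrier: "X \<in> carrier_mat N k \<Longrightarrow> qh_filter k X V \<sigma> n \<in> carrier_mat N N"
  unfolding qh_filter_def by (intro carrier_matI) (auto dest: carrier_matD)

lemma qh_proj_carrier: "X \<in> carrier_mat N k \<Longrightarrow> qh_proj X \<in> carrier_mat N N"
  unfolding qh_proj_def by (intro carrier_matI) (auto dest: carrier_matD)

lemma diff_common_shift_mat:
  fixes A B C :: "'a :: ab_group_add mat"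
  assumes "A \<in> carrier_mat N N" "B \<in> carrier_mat N N" "C \<in> carrier_mat N N"
    "P \<in> carrier_mat N N" "Q \<in> carrier_mat N N"
  shows "(A + C - P - Q) - (B + C - P - Q) = A - B"
  using assms by (intro eq_matI) auto

theorem mainTheorem6:
  fixes N NS NL :: nat and Sig Lam US SS VS UL SL VL :: "real mat"
    and \<sigma>S \<sigma>L :: "nat \<Rightarrow> real"
  assumes mesh: "mesh_matrices N NS NL Sig Lam"
    and svdS: "is_svd N NS Sig US SS VS \<sigma>S"
    and svdL: "is_svd N NL Lam UL SL VL \<sigma>L"
  defines "PSn \<equiv> qh_filter NS Sig VS \<sigma>S" and "PLn \<equiv> qh_filter NL Lam VL \<sigma>L"
    and "PLH \<equiv> (\<lambda>n. qh_filter NL Lam VL \<sigma>L n + 1\<^sub>m N - qh_proj Sig - qh_proj Lam)"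
    and "PSH \<equiv> (\<lambda>n. qh_filter NS Sig VS \<sigma>S n + 1\<^sub>m N - qh_proj Lam - qh_proj Sig)"
  shows "(\<forall>m n p q. 1 \<le> m \<and> m < n \<and> n < p \<and> p < q \<and> q \<le> NS \<longrightarrow>
            (PSn m - PSn n) * (PSn p - PSn q) = 0\<^sub>m N N \<and>
            (PSH m - PSH n) * (PSH p - PSH q) = 0\<^sub>m N N) \<and>
         (\<forall>m n p q. 1 \<le> m \<and> m < n \<and> n < p \<and> p < q \<and> q \<le> NL \<longrightarrow>
            (PLn m - PLn n) * (PLn p - PLn q) = 0\<^sub>m N N \<and>
            (PLH m - PLH n) * (PLH p - PLH q) = 0\<^sub>m N N)"
proof -
  have Sig: "Sig \<in> carrier_mat N NS" and Lam: "Lam \<in> carrier_mat N NL"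
    using svdS svdL unfolding is_svd_def by blast+
  have PSH_diff: "PSH a - PSH b = PSn a - PSn b" for a b
    unfolding PSH_def PSn_def
    by (rule diff_common_shift_mat[OF qh_filter_carrier[OF Sig] qh_filter_carrier[OF Sig]
          one_carrier_mat qh_proj_carrier[OF Lam] qh_proj_carrier[OF Sig]])
  have PLH_diff: "PLH a - PLH b = PLn a - PLn b" for a b
    unfolding PLH_def PLn_def
    by (rule diff_common_shift_mat[OF qh_filter_carrier[OF Lam] qh_filter_carrier[OF Lam]
          one_carrier_mat qh_proj_carrier[OF Sig] qh_proj_carrier[OF Lam]])
  have "(PSn m - PSn n) * (PSn p - PSn q) = 0\<^sub>m N N" if "m < n" "n < p" "p < q" for m n p q
    unfolding PSn_def using that by (intro qh_filter_diff_mult_eq_0[OF svdS]) simp_all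
  moreover have "(PLn m - PLn n) * (PLn p - PLn q) = 0\<^sub>m N N" if "m < n" "n < p" "p < q" for m n p q
    unfolding PLn_def using that by (intro qh_filter_diff_mult_eq_0[OF svdL]) simp_all
  ultimately show ?thesis
    unfolding PSH_diff PLH_diff by blast
qed

end
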